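(* Let $(p_{nm})_{n,m\in\{0,1,2\}}$ be a probability vector with $p_{01}=p_{02}=0$, let $\mathcal{N}$ be the qutrit Pauli channel with these probabilities, and let the initial shared state be $\sigma=\sum_{n,m}p_{nm}|\Phi^{n,m}\rangle\langle\Phi^{n,m}|$ (fidelity $p_{00}$). Let $F_N$ denote the fidelity $\langle\Phi^{0,0}|\rho_N|\Phi^{0,0}\rangle$ of the shared state $\rho_N$ after $N$ successful rounds of the single-carrier protocol (described in the context) without any pre-processing. Then $F_N\to 1$ as $N\to\infty$ if and only if $$p_{00}>\max\{p_{10}+p_{11}+p_{12},\;p_{20}+p_{21}+p_{22}\}.$$
   Context: Let $\omega=e^{2\pi i/3}$ and on $\mathbb{C}^3$ with basis $|0\rangle,|1\rangle,|2\rangle$ define $X|j\rangle=|(j+1)\bmod 3\rangle$, $Z|j\rangle=\omega^j|j\rangle$. The two-qutrit Bell states are $|\Phi^{n,m}\rangle=\frac{1}{\sqrt3}\sum_{j=0}^2\omega^{mj}|j,(j+n)\bmod 3\rangle$, $n,m\in\{0,1,2\}$. The qutrit Pauli channel with probabilities $p_{nm}$ is $\mathcal{N}(\rho)=\sum_{n,m}p_{nm}Z^mX^n\rho X^{-n}Z^{-m}$; sending one half of $|\Phi^{0,0}\rangle$ through it gives $\sigma=\sum p_{nm}|\Phi^{n,m}\rangle\langle\Phi^{n,m}|$. Single-carrier protocol round: Alice (holding qutrit $A$ of the shared pair) prepares a carrier qutrit $T$ in $|0\rangle$ and applies $U_{CN}|j\rangle_A|k\rangle_T=|j\rangle_A|(j+k)\bmod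 3\rangle_T$; the carrier is sent to Bob through the same channel $\mathcal{N}$; Bob (holding qutrit $B$) applies $U_{CN'}|j\rangle_B|k\rangle_T=|j\rangle_B|(k-j)\bmod 3\rangle_T$ and measures $T$ in the computational basis; the round succeeds if the outcome is $0$, in which case the post-measurement state of $AB$ is kept. Successive rounds act on the kept state of the previous round, each with a fresh carrier sent through $\mathcal{N}$. *)

theory Defs
  imports "HOL-Analysis.Analysis"
begin

text \<open>Operators are represented by their matrix entries, indexed by an index type;
  a qutrit index is a natural number in trits = {0,1,2}; two-qutrit (A,B) indices
  are pairs (a,b); three-qutrit (A,B,T) indices are ((a,b),t).\<close>

type_synonym 'i op = "'i \<Rightarrow> 'i \<Rightarrow> complex"

definition omega :: complex where "omega = cis (2 * pi / 3)"

definition trits :: "nat set" where "trits = {0, 1, 2}"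

definition I2 :: "(nat \<times> nat) set" where "I2 = trits \<times> trits"

definition I3 :: "((nat \<times> nat) \<times> nat) set" where "I3 = (trits \<times> trits) \<times> trits"

definition mmult :: "'i set \<Rightarrow> 'i op \<Rightarrow> 'i op \<Rightarrow> 'i op" where
  "mmult I A B = (\<lambda>x y. \<Sum>z\<in>I. A x z * B z y)"

definition adj :: "'i op \<Rightarrow> 'i op" where
  "adj A = (\<lambda>x y. cnj (A y x))"

definition idop :: "'i op" where
  "idop = (\<lambda>x y. if x = y then 1 else 0)"

fun mpow :: "'i set \<Rightarrow> 'i op \<Rightarrow> nat \<Rightarrow> 'i op" where
  "mpow I A 0 = idop"
| "mpow I A (Suc k) = mmult I A (mpow I A k)"

definition conj_by :: "'i set \<Rightarrow> 'i op \<Rightarrow> 'i op \<Rightarrow> 'i op" where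
  "conj_by I U rho = mmult I (mmult I U rho) (adj U)"

definition trace :: "'i set \<Rightarrow> 'i op \<Rightarrow> complex" where
  "trace I A = (\<Sum>x\<in>I. A x x)"

definition Xq :: "nat op" where
  "Xq = (\<lambda>i j. if i = (j + 1) mod 3 then 1 else 0)"

definition Zq :: "nat op" where
  "Zq = (\<lambda>i j. if i = j then omega ^ j else 0)"

definition pauli_op :: "nat \<Rightarrow> nat \<Rightarrow> nat op" where
  "pauli_op n m = mmult trits (mpow trits Zq m) (mpow trits Xq n)"

definition pauli_channel :: "(nat \<Rightarrow> nat \<Rightarrow> real) \<Rightarrow> nat op \<Rightarrow> nat op" where
  "pauli_channel p rho = (\<lambda>x y. \<Sum>n\<in>trits. \<Sum>m\<in>trits.
      complex_of_real (p n m) * conj_by trits (pauli_op n m) rho x y)"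

definition on_T :: "nat op \<Rightarrow> ((nat \<times> nat) \<times> nat) op" where
  "on_T U = (\<lambda>(ab, t) (ab', t'). if ab = ab' then U t t' else 0)"

definition channel_T :: "(nat \<Rightarrow> nat \<Rightarrow> real) \<Rightarrow> ((nat \<times> nat) \<times> nat) op \<Rightarrow> ((nat \<times> nat) \<times> nat) op" where
  "channel_T p R = (\<lambda>x y. \<Sum>n\<in>trits. \<Sum>m\<in>trits.
      complex_of_real (p n m) * conj_by I3 (on_T (pauli_op n m)) R x y)"

definition U_CN :: "((nat \<times> nat) \<times> nat) op" where
  "U_CN = (\<lambda>((a, b), t) ((a', b'), t').
      if a = a' \<and> b = b' \<and> t = (a' + t') mod 3 then 1 else 0)"

definition U_CN' :: "((nat \<times> nat) \<times> nat) op" where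
  "U_CN' = (\<lambda>((a, b), t) ((a', b'), t').
      if a = a' \<and> b = b' \<and> t = (t' + 3 - b') mod 3 then 1 else 0)"

definition attach_carrier :: "(nat \<times> nat) op \<Rightarrow> ((nat \<times> nat) \<times> nat) op" where
  "attach_carrier rho = (\<lambda>(ab, t) (ab', t'). if t = 0 \<and> t' = 0 then rho ab ab' else 0)"

definition post_select :: "((nat \<times> nat) \<times> nat) op \<Rightarrow> (nat \<times> nat) op" where
  "post_select R = (\<lambda>ab ab'. R (ab, 0) (ab', 0))"

definition protocol_round :: "(nat \<Rightarrow> nat \<Rightarrow> real) \<Rightarrow> (nat \<times> nat) op \<Rightarrow> (nat \<times> nat) op" where
  "protocol_round p rho =
     (let R = conj_by I3 U_CN' (channel_T p (conj_by I3 U_CN (attach_carrier rho)));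
          S = post_select R
      in (\<lambda>x y. S x y / trace I2 S))"

definition bell :: "nat \<Rightarrow> nat \<Rightarrow> nat \<times> nat \<Rightarrow> complex" where
  "bell n m = (\<lambda>(j, k). if k = (j + n) mod 3 then omega ^ (m * j) / complex_of_real (sqrt 3) else 0)"

definition proj :: "('i \<Rightarrow> complex) \<Rightarrow> 'i op" where
  "proj v = (\<lambda>x y. v x * cnj (v y))"

definition bell_diag :: "(nat \<Rightarrow> nat \<Rightarrow> real) \<Rightarrow> (nat \<times> nat) op" where
  "bell_diag p = (\<lambda>x y. \<Sum>n\<in>trits. \<Sum>m\<in>trits. complex_of_real (p n m) * proj (bell n m) x y)"

definition fidelity :: "(nat \<times> nat) op \<Rightarrow> complex" where
  "fidelity rho = (\<Sum>x\<in>I2. \<Sum>y\<in>I2. cnj (bell 0 0 x) * rho x y * bell 0 0 y)"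

end

theory Submission
  imports Defs
begin

text \<open>The gates of a round and the Kraus operators of the channel are monomial matrices, and
  post-selecting the carrier on 0 keeps exactly the Kraus terms whose shift X^n matches the Bell
  index of the entry. Hence a round acts entrywise: the kept state is the normalised Hadamard
  product of the current state with the initial state sigma, so after N rounds the state is the
  normalised (N+1)-st Hadamard power of sigma. The diagonal of sigma carries each weight P_n / 3,
  P_n = sum_m p_nm, three times, and when p_01 = p_02 = 0 all entries <aa|sigma|a'a'> equal p_00 / 3.
  Therefore F_N = P_0^(N+1) / (P_0^(N+1) + P_1^(N+1) + P_2^(N+1)), which tends to 1 exactly when
  P_0 strictly exceeds P_1 and P_2.\<close>

lemma mem_trits: "n \<in> trits \<longleftrightarrow> n < 3"
  by (auto simp: trits_def)

lemma finite_trits [simp]: "finite trits" and card_trits [simp]: "card trits = 3"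
  by (simp_all add: trits_def)

lemma sum_trits: "(\<Sum>n\<in>trits. f n) = f 0 + f 1 + f 2"
  by (simp add: trits_def add.assoc)

lemma mem_I2: "(a, b) \<in> I2 \<longleftrightarrow> a < 3 \<and> b < 3"
  by (auto simp: I2_def mem_trits)

lemma mem_I3: "((a, b), t) \<in> I3 \<longleftrightarrow> a < 3 \<and> b < 3 \<and> t < 3"
  by (auto simp: I3_def mem_trits)

lemma finite_I2 [simp]: "finite I2" and finite_I3 [simp]: "finite I3"
  by (simp_all add: I2_def I3_def)

lemma sum_I2: "(\<Sum>z\<in>I2. f z) = (\<Sum>a\<in>trits. \<Sum>b\<in>trits. f (a, b))"
  unfolding I2_def by (simp add: sum.cartesian_product)

lemma less_3_cases: "(t::nat) < 3 \<longleftrightarrow> t = 0 \<or> t = 1 \<or> t = 2"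
  by auto

lemma add_mod_3_eq_iff:
  fixes a s t :: nat
  assumes "a < 3" "s < 3" "t < 3"
  shows "t = (a + s) mod 3 \<longleftrightarrow> s = (t + 3 - a) mod 3"
  using assms unfolding less_3_cases by (elim disjE) simp_all

lemma power_mod_eq_if_power_eq_1:
  fixes z :: "'a::monoid_mult"
  assumes "z ^ n = 1"
  shows "z ^ (k mod n) = z ^ k"
proof -
  have "z ^ k = z ^ (n * (k div n) + k mod n)"
    by simp
  also have "\<dots> = z ^ (k mod n)"
    by (simp only: power_add power_mult assms power_one mult_1)
  finally show ?thesis ..
qed

lemma of_real_sqrt_3_squared [simp]: "complex_of_real (sqrt 3) * complex_of_real (sqrt 3) = 3"
  by (simp flip: of_real_mult)

lemma omega_pow_3: "omega ^ 3 = 1"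
  unfolding omega_def Complex.DeMoivre by simp

lemma omega_pow_mult_cnj_pow [simp]: "omega ^ k * cnj omega ^ k = 1"
  by (simp add: omega_def cis_cnj cis_mult Complex.DeMoivre)

lemma omega_phase_shift:
  "omega ^ (m * ((a + n) mod 3)) * cnj omega ^ (m * ((a' + n) mod 3))
    = omega ^ (m * a) * cnj omega ^ (m * a')"
proof -
  have mod_out: "z ^ (m * ((c + n) mod 3)) = z ^ (m * c) * z ^ (m * n)" if "z ^ 3 = 1" for z :: complex and c
    by (metis power_mod_eq_if_power_eq_1[OF that] mod_mult_right_eq distrib_left power_add)
  have "cnj omega ^ 3 = 1"
    by (metis complex_cnj_one complex_cnj_power omega_pow_3)
  then have "omega ^ (m * ((a + n) mod 3)) * cnj omega ^ (m * ((a' + n) mod 3))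
      = omega ^ (m * a) * cnj omega ^ (m * a') * (omega ^ (m * n) * cnj omega ^ (m * n))"
    by (simp add: mod_out omega_pow_3 mult_ac)
  then show ?thesis by simp
qed

lemma conj_by_monomial:
  assumes "finite I" and "g ` I \<subseteq> I"
    and U: "\<And>x w. x \<in> I \<Longrightarrow> w \<in> I \<Longrightarrow> U x w = (if w = g x then \<phi> x else 0)"
    and x: "x \<in> I" and y: "y \<in> I"
  shows "conj_by I U R x y = \<phi> x * cnj (\<phi> y) * R (g x) (g y)"
proof -
  have gI: "g x \<in> I" "g y \<in> I"
    using assms(2) x y by auto
  have UR: "mmult I U R x z = \<phi> x * R (g x) z" for z
  proof -
    have "mmult I U R x z = (\<Sum>w\<in>I. if w = g x then \<phi> x * R w z else 0)"
      unfolding mmult_def by (rule sum.cong) (auto simp: U[OF x])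
    then show ?thesis
      using assms(1) gI by simp
  qed
  have "conj_by I U R x y = (\<Sum>z\<in>I. if z = g y then \<phi> x * R (g x) z * cnj (\<phi> y) else 0)"
    unfolding conj_by_def mmult_def[of I "mmult I U R"] adj_def UR
    by (rule sum.cong) (auto simp: U[OF y])
  then show ?thesis
    using assms(1) gI by simp
qed

lemma funpow_normalised_hadamard:
  fixes s :: "'i \<Rightarrow> 'i \<Rightarrow> 'a::field"
  assumes f: "\<And>\<rho> x y. x \<in> I \<Longrightarrow> y \<in> I \<Longrightarrow> f \<rho> x y = s x y * \<rho> x y / (\<Sum>z\<in>I. s z z * \<rho> z z)"
    and trace: "(\<Sum>z\<in>I. s z z) = 1"
    and nonzero: "\<And>k. (\<Sum>z\<in>I. s z z ^ Suc k) \<noteq> 0"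
    and "x \<in> I" "y \<in> I"
  shows "(f ^^ N) s x y = s x y ^ Suc N / (\<Sum>z\<in>I. s z z ^ Suc N)"
  using \<open>x \<in> I\<close> \<open>y \<in> I\<close>
proof (induction N arbitrary: x y)
  case 0
  then show ?case by (simp add: trace)
next
  case (Suc N)
  let ?T = "\<lambda>k. \<Sum>z\<in>I. s z z ^ Suc k"
  have "(\<Sum>z\<in>I. s z z * (f ^^ N) s z z) = ?T (Suc N) / ?T N"
    by (simp add: Suc.IH sum_divide_distrib)
  then show ?case
    using Suc nonzero[of N] by (simp add: f)
qed

lemma power_share_tendsto_1_iff:
  fixes w :: "'i \<Rightarrow> real"
  assumes S: "finite S" "i \<in> S" and nonneg: "\<And>j. j \<in> S \<Longrightarrow> 0 \<le> w j"
    and pos: "\<exists>j\<in>S. 0 < w j"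
  shows "(\<lambda>n. w i ^ n / (\<Sum>j\<in>S. w j ^ n)) \<longlonglongrightarrow> 1 \<longleftrightarrow> (\<forall>j\<in>S - {i}. w j < w i)"
proof
  assume lim: "(\<lambda>n. w i ^ n / (\<Sum>j\<in>S. w j ^ n)) \<longlonglongrightarrow> 1"
  show "\<forall>j\<in>S - {i}. w j < w i"
  proof (rule ccontr)
    assume "\<not> (\<forall>j\<in>S - {i}. w j < w i)"
    then obtain j where j: "j \<in> S" "j \<noteq> i" "w i \<le> w j"
      by (auto simp: not_less)
    have "w i ^ n / (\<Sum>j\<in>S. w j ^ n) \<le> 1 / 2" for n
    proof -
      have "w i ^ n \<le> w j ^ n"
        using j nonneg S by (simp add: power_mono)
      moreover have "w i ^ n + w j ^ n \<le> (\<Sum>j\<in>S. w j ^ n)"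
        using sum_mono2[OF S(1), of "{i, j}" "\<lambda>j. w j ^ n"] S j nonneg by simp
      moreover have "0 \<le> w i ^ n"
        using nonneg S by simp
      ultimately show ?thesis
        by (cases "(\<Sum>j\<in>S. w j ^ n) = 0") (auto simp: divide_le_eq)
    qed
    then have "1 \<le> (1 / 2 :: real)"
      using LIMSEQ_le_const2[OF lim] by blast
    then show False by simp
  qed
next
  assume dominant: "\<forall>j\<in>S - {i}. w j < w i"
  obtain j where "j \<in> S" "0 < w j"
    using pos by blast
  then have wi: "0 < w i"
    using dominant by (cases "j = i") (auto intro: less_trans)
  have ratio: "w i ^ n / (\<Sum>j\<in>S. w j ^ n) = 1 / (1 + (\<Sum>j\<in>S - {i}. (w j / w i) ^ n))" for n
  proof -
    have "(\<Sum>j\<in>S. w j ^ n) = w i ^ n * (1 + (\<Sum>j\<in>S - {i}. (w j / w i) ^ n))"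
      using wi S by (simp add: sum.remove distrib_left sum_distrib_left power_divide)
    then show ?thesis
      using wi by simp
  qed
  have "(\<lambda>n. \<Sum>j\<in>S - {i}. (w j / w i) ^ n) \<longlonglongrightarrow> 0"
    using dominant nonneg wi by (intro tendsto_null_sum LIMSEQ_power_zero) (auto simp: divide_less_eq)
  then have "(\<lambda>n. 1 / (1 + (\<Sum>j\<in>S - {i}. (w j / w i) ^ n))) \<longlonglongrightarrow> 1 / (1 + 0)"
    by (intro tendsto_intros) simp_all
  then show "(\<lambda>n. w i ^ n / (\<Sum>j\<in>S. w j ^ n)) \<longlonglongrightarrow> 1"
    by (simp add: ratio)
qed

lemma mpow_Zq_entry:
  "t < 3 \<Longrightarrow> s < 3 \<Longrightarrow> mpow trits Zq m t s = (if t = s then omega ^ (m * t) else 0)"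
proof (induction m arbitrary: t s)
  case 0
  then show ?case by (simp add: idop_def)
next
  case (Suc m)
  have "mpow trits Zq (Suc m) t s = (\<Sum>z\<in>trits. if z = t then Zq t t * mpow trits Zq m t s else 0)"
    unfolding mpow.simps mmult_def by (rule sum.cong) (auto simp: Zq_def)
  then show ?case
    using Suc by (simp add: mem_trits Zq_def power_add)
qed

lemma mpow_Xq_entry:
  "t < 3 \<Longrightarrow> s < 3 \<Longrightarrow> mpow trits Xq n t s = (if t = (n + s) mod 3 then 1 else 0)"
proof (induction n arbitrary: t s)
  case 0
  then show ?case by (simp add: idop_def)
next
  case (Suc n)
  have "mpow trits Xq (Suc n) t s = (\<Sum>z\<in>trits. if z = (n + s) mod 3 then Xq t z else 0)"
    unfolding mpow.simps mmult_def by (rule sum.cong) (auto simp: Suc mem_trits)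
  then show ?case
    by (simp add: mem_trits Xq_def mod_Suc_eq)
qed

lemma pauli_op_entry:
  assumes "n < 3" "t < 3" "s < 3"
  shows "pauli_op n m t s = (if s = (t + 3 - n) mod 3 then omega ^ (m * t) else 0)"
proof -
  have "pauli_op n m t s = (\<Sum>z\<in>trits. if z = t then omega ^ (m * t) * mpow trits Xq n t s else 0)"
    unfolding pauli_op_def mmult_def
    by (rule sum.cong) (auto simp: mpow_Zq_entry mem_trits assms)
  then show ?thesis
    using assms by (simp add: mem_trits mpow_Xq_entry add_mod_3_eq_iff)
qed

lemma conj_U_CN_entry:
  assumes "((a, b), t) \<in> I3" "((a', b'), t') \<in> I3"
  shows "conj_by I3 U_CN R ((a, b), t) ((a', b'), t')
    = R ((a, b), (t + 3 - a) mod 3) ((a', b'), (t' + 3 - a') mod 3)"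
proof -
  let ?g = "\<lambda>((a, b), t). ((a, b), (t + 3 - a) mod 3)"
  have "U_CN x w = (if w = ?g x then 1 else 0)" if "x \<in> I3" "w \<in> I3" for x w
    using that by (cases x, cases w) (auto simp: U_CN_def mem_I3 add_mod_3_eq_iff split: if_splits)
  moreover have "?g ` I3 \<subseteq> I3"
    by (auto simp: mem_I3 split: prod.splits)
  ultimately show ?thesis
    using conj_by_monomial[of I3 ?g U_CN "\<lambda>_. 1"] assms by simp
qed

lemma conj_U_CN'_entry:
  assumes "((a, b), t) \<in> I3" "((a', b'), t') \<in> I3"
  shows "conj_by I3 U_CN' R ((a, b), t) ((a', b'), t')
    = R ((a, b), (b + t) mod 3) ((a', b'), (b' + t') mod 3)"
proof -
  let ?g = "\<lambda>((a, b), t). ((a, b), (b + t) mod 3)"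
  have "U_CN' x w = (if w = ?g x then 1 else 0)" if "x \<in> I3" "w \<in> I3" for x w
    using that
    by (cases x, cases w) (auto simp: U_CN'_def mem_I3 add_mod_3_eq_iff[symmetric] split: if_splits)
  moreover have "?g ` I3 \<subseteq> I3"
    by (auto simp: mem_I3 split: prod.splits)
  ultimately show ?thesis
    using conj_by_monomial[of I3 ?g U_CN' "\<lambda>_. 1"] assms by simp
qed

lemma conj_on_T_pauli_entry:
  assumes "n < 3" "((a, b), t) \<in> I3" "((a', b'), t') \<in> I3"
  shows "conj_by I3 (on_T (pauli_op n m)) R ((a, b), t) ((a', b'), t')
    = omega ^ (m * t) * cnj omega ^ (m * t')
      * R ((a, b), (t + 3 - n) mod 3) ((a', b'), (t' + 3 - n) mod 3)"
proof -
  let ?g = "\<lambda>(ab, t). (ab, (t + 3 - n) mod 3)"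
  have "on_T (pauli_op n m) x w = (if w = ?g x then omega ^ (m * snd x) else 0)"
    if "x \<in> I3" "w \<in> I3" for x w
    using that \<open>n < 3\<close> by (cases x, cases w) (auto simp: on_T_def mem_I3 pauli_op_entry)
  moreover have "?g ` I3 \<subseteq> I3"
    by (auto simp: mem_I3 split: prod.splits)
  ultimately show ?thesis
    using conj_by_monomial[of I3 ?g "on_T (pauli_op n m)" "\<lambda>x. omega ^ (m * snd x)"] assms
    by simp
qed

definition bell_index :: "nat \<times> nat \<Rightarrow> nat" where
  "bell_index = (\<lambda>(a, b). (b + 3 - a) mod 3)"

lemma bell_index_less_3: "bell_index x < 3"
  by (simp add: bell_index_def split: prod.split)

lemma snd_eq_fst_plus_bell_index: "a < 3 \<Longrightarrow> b < 3 \<Longrightarrow> b = (a + bell_index (a, b)) mod 3"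
  by (simp add: bell_index_def add_mod_3_eq_iff)

lemma bell_entry:
  "n < 3 \<Longrightarrow> a < 3 \<Longrightarrow> b < 3 \<Longrightarrow>
    bell n m (a, b) = (if n = bell_index (a, b) then omega ^ (m * a) / sqrt 3 else 0)"
  by (simp add: bell_def bell_index_def add_mod_3_eq_iff)

definition shift_weight :: "(nat \<Rightarrow> nat \<Rightarrow> real) \<Rightarrow> nat \<Rightarrow> real" where
  "shift_weight p n = (\<Sum>m\<in>trits. p n m)"

text \<open>The phases are written with the second qutrit; they agree with the phases omega^(m a) of
  the Bell states because b - a = b' - a' (mod 3) on the support, and this is the form in which
  the protocol round produces them.\<close>

lemma bell_diag_entry:
  assumes "(a, b) \<in> I2" "(a', b') \<in> I2"
  shows "bell_diag p (a, b) (a', b') =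
    (if bell_index (a, b) = bell_index (a', b')
     then (\<Sum>m\<in>trits. of_real (p (bell_index (a, b)) m) * omega ^ (m * b) * cnj omega ^ (m * b')) / 3
     else 0)"
proof -
  define k where "k = bell_index (a, b)"
  have ab: "a < 3" "b < 3" "a' < 3" "b' < 3"
    using assms by (auto simp: mem_I2)
  have k: "k < 3"
    by (simp add: k_def bell_index_less_3)
  have proj_bell: "proj (bell n m) (a, b) (a', b') =
      (if n = k then if k = bell_index (a', b') then omega ^ (m * a) * cnj omega ^ (m * a') / 3 else 0 else 0)"
    if "n \<in> trits" for n m
    using that ab by (simp add: proj_def bell_entry mem_trits k_def)
  have phase: "omega ^ (m * b) * cnj omega ^ (m * b') = omega ^ (m * a) * cnj omega ^ (m * a')"
    if "k = bell_index (a', b')" for m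
    using omega_phase_shift[of m a k a'] snd_eq_fst_plus_bell_index ab that k_def by metis
  have "bell_diag p (a, b) (a', b') = (\<Sum>n\<in>trits. if n = k then
      (if k = bell_index (a', b')
       then (\<Sum>m\<in>trits. of_real (p n m) * omega ^ (m * a) * cnj omega ^ (m * a')) / 3 else 0)
      else 0)"
    unfolding bell_diag_def
    by (intro sum.cong refl) (simp add: proj_bell sum_divide_distrib mult.assoc)
  also have "\<dots> = (if k = bell_index (a', b')
      then (\<Sum>m\<in>trits. of_real (p k m) * omega ^ (m * b) * cnj omega ^ (m * b')) / 3 else 0)"
    using k by (simp add: mem_trits phase mult.assoc)
  finally show ?thesis by (simp add: k_def)
qed

lemma bell_diag_diagonal:
  "x \<in> I2 \<Longrightarrow> bell_diag p x x = of_real (shift_weight p (bell_index x)) / 3"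
  by (cases x) (simp add: bell_diag_entry shift_weight_def mult.assoc)

lemma bell_diag_entry_equal_pairs:
  assumes "p 0 1 = 0" "p 0 2 = 0" "a < 3" "a' < 3"
  shows "bell_diag p (a, a) (a', a') = of_real (p 0 0) / 3"
  using assms by (simp add: bell_diag_entry mem_I2 bell_index_def sum_trits)

lemma sum_I2_bell_index:
  fixes g :: "nat \<Rightarrow> 'a::comm_ring_1"
  shows "(\<Sum>z\<in>I2. g (bell_index z)) = 3 * (\<Sum>n\<in>trits. g n)"
  by (simp add: sum_I2 sum_trits bell_index_def algebra_simps)

lemma carrier_returns_to_0_iff:
  "a < 3 \<Longrightarrow> b < 3 \<Longrightarrow> n < 3 \<Longrightarrow>
    ((b + 3 - n) mod 3 + 3 - a) mod 3 = 0 \<longleftrightarrow> n = bell_index (a, b)"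
  unfolding less_3_cases bell_index_def by (elim disjE) simp_all

text \<open>The carrier returns to 0 exactly for the error shift n equal to the Bell index of both row
  and column.\<close>

lemma post_selected_round_entry:
  assumes "x \<in> I2" "y \<in> I2"
  shows "post_select (conj_by I3 U_CN' (channel_T p (conj_by I3 U_CN (attach_carrier \<rho>)))) x y
    = 3 * bell_diag p x y * \<rho> x y"
proof -
  obtain a b a' b' where xy: "x = (a, b)" "y = (a', b')"
    by (cases x, cases y)
  have ab: "a < 3" "b < 3" "a' < 3" "b' < 3"
    using assms by (auto simp: xy mem_I2)
  define k k' where "k = bell_index (a, b)" and "k' = bell_index (a', b')"
  have channel: "channel_T p R ((a, b), b) ((a', b'), b') = (\<Sum>n\<in>trits. \<Sum>m\<in>trits. of_real (p n m) *
      (omega ^ (m * b) * cnj omega ^ (m * b') * R ((a, b), (b + 3 - n) mod 3) ((a', b'), (b' + 3 - n) mod 3)))"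
    for R
    unfolding channel_T_def
    by (intro sum.cong refl) (simp add: conj_on_T_pauli_entry mem_trits mem_I3 ab)
  have carrier: "conj_by I3 U_CN (attach_carrier \<rho>) ((a, b), (b + 3 - n) mod 3) ((a', b'), (b' + 3 - n) mod 3)
      = (if n = k then if k = k' then \<rho> (a, b) (a', b') else 0 else 0)" if "n \<in> trits" for n
    using that ab
    by (simp add: conj_U_CN_entry mem_I3 mem_trits attach_carrier_def carrier_returns_to_0_iff k_def k'_def)
  have "post_select (conj_by I3 U_CN' (channel_T p (conj_by I3 U_CN (attach_carrier \<rho>)))) x y
      = (\<Sum>n\<in>trits. \<Sum>m\<in>trits. of_real (p n m) *
          (omega ^ (m * b) * cnj omega ^ (m * b') * (if n = k then if k = k' then \<rho> x y else 0 else 0)))"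
    unfolding post_select_def xy using ab
    by (simp add: conj_U_CN'_entry mem_I3 channel carrier cong: sum.cong)
  also have "\<dots> = (\<Sum>n\<in>trits. if n = k then
      (\<Sum>m\<in>trits. of_real (p n m) * omega ^ (m * b) * cnj omega ^ (m * b')) * (if k = k' then \<rho> x y else 0)
      else 0)"
    by (intro sum.cong refl) (simp add: sum_distrib_right mult.assoc)
  also have "\<dots> = 3 * bell_diag p x y * \<rho> x y"
    using assms bell_index_less_3[of "(a, b)"]
    by (simp add: xy bell_diag_entry mem_trits k_def k'_def)
  finally show ?thesis .
qed

lemma protocol_round_entry:
  assumes "x \<in> I2" "y \<in> I2"
  shows "protocol_round p \<rho> x y = bell_diag p x y * \<rho> x y / (\<Sum>z\<in>I2. bell_diag p z z * \<rho> z z)"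
proof -
  have "trace I2 (post_select (conj_by I3 U_CN' (channel_T p (conj_by I3 U_CN (attach_carrier \<rho>)))))
      = 3 * (\<Sum>z\<in>I2. bell_diag p z z * \<rho> z z)"
    unfolding trace_def by (simp add: post_selected_round_entry sum_distrib_left mult.assoc cong: sum.cong)
  then show ?thesis
    using assms by (simp add: protocol_round_def Let_def post_selected_round_entry mult.assoc)
qed

lemma fidelity_eq_sum_equal_pairs:
  "fidelity \<rho> = (\<Sum>a\<in>trits. \<Sum>a'\<in>trits. \<rho> (a, a) (a', a')) / 3"
proof -
  have bell00: "bell 0 0 x = (if fst x = snd x then 1 / sqrt 3 else 0)" if "x \<in> I2" for x
    using that by (cases x) (auto simp: bell_def mem_I2)
  have "fidelity \<rho> = (\<Sum>x\<in>I2. if fst x = snd x then (\<Sum>y\<in>I2. if fst y = snd y then \<rho> x y / 3 else 0) else 0)"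
    unfolding fidelity_def by (intro sum.cong refl) (auto simp: bell00 intro!: sum.cong)
  then show ?thesis
    by (simp add: sum_I2 sum_trits)
qed

lemma shift_weight_nonneg_ex_pos:
  assumes nonneg: "\<forall>n\<in>trits. \<forall>m\<in>trits. p n m \<ge> 0"
    and normalised: "(\<Sum>n\<in>trits. \<Sum>m\<in>trits. p n m) = 1"
  shows "\<forall>n\<in>trits. 0 \<le> shift_weight p n" "\<exists>n\<in>trits. 0 < shift_weight p n"
  using assms by (auto simp: shift_weight_def sum_nonneg sum_trits trits_def)

lemma fidelity_protocol_iterate:
  assumes nonneg: "\<forall>n\<in>trits. \<forall>m\<in>trits. p n m \<ge> 0"
    and normalised: "(\<Sum>n\<in>trits. \<Sum>m\<in>trits. p n m) = 1"
    and "p 0 1 = 0" "p 0 2 = 0"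
  shows "fidelity ((protocol_round p ^^ N) (bell_diag p))
    = of_real ((shift_weight p 0 / 3) ^ Suc N / (\<Sum>n\<in>trits. (shift_weight p n / 3) ^ Suc N))"
proof -
  define w where "w n = shift_weight p n / 3" for n
  have diag: "bell_diag p z z = of_real (w (bell_index z))" if "z \<in> I2" for z
    using that by (simp add: bell_diag_diagonal w_def)
  have powers: "(\<Sum>z\<in>I2. bell_diag p z z ^ k) = 3 * of_real (\<Sum>n\<in>trits. w n ^ k)" for k
    by (simp add: diag sum_I2_bell_index[of "\<lambda>n. of_real (w n) ^ k"] cong: sum.cong)
  have "0 < (\<Sum>n\<in>trits. w n ^ Suc k)" for k
    using shift_weight_nonneg_ex_pos[OF nonneg normalised]
    by (auto simp: w_def intro: sum_pos2)
  then have nonzero: "(\<Sum>z\<in>I2. bell_diag p z z ^ Suc k) \<noteq> 0" for k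
    unfolding powers by (metis mult_eq_0_iff of_real_eq_0_iff zero_neq_numeral less_irrefl)
  have "(\<Sum>n\<in>trits. w n) = 1 / 3"
    using normalised by (simp add: w_def shift_weight_def flip: sum_divide_distrib)
  then have trace: "(\<Sum>z\<in>I2. bell_diag p z z) = 1"
    using powers[of 1] by (simp only: power_one_right) simp
  have iterate: "(protocol_round p ^^ N) (bell_diag p) x y
      = bell_diag p x y ^ Suc N / (3 * of_real (\<Sum>n\<in>trits. w n ^ Suc N))"
    if "x \<in> I2" "y \<in> I2" for x y
    using funpow_normalised_hadamard[where f = "protocol_round p" and s = "bell_diag p" and N = N,
        OF protocol_round_entry trace nonzero that]
    by (simp only: powers)
  have pair: "(protocol_round p ^^ N) (bell_diag p) (a, a) (a', a')
      = of_real (w 0) ^ Suc N / (3 * of_real (\<Sum>n\<in>trits. w n ^ Suc N))"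
    if "a \<in> trits" "a' \<in> trits" for a a'
  proof -
    have "bell_diag p (a, a) (a', a') = of_real (w 0)"
      using assms that by (simp add: bell_diag_entry_equal_pairs mem_trits w_def shift_weight_def sum_trits)
    moreover have "(a, a) \<in> I2" "(a', a') \<in> I2"
      using that by (simp_all add: mem_I2 mem_trits)
    ultimately show ?thesis
      by (simp only: iterate)
  qed
  show ?thesis
    unfolding fidelity_eq_sum_equal_pairs by (simp add: pair w_def)
qed

theorem proposition1:
  fixes p :: "nat \<Rightarrow> nat \<Rightarrow> real"
  assumes nonneg: "\<forall>n\<in>trits. \<forall>m\<in>trits. p n m \<ge> 0"
    and normalised: "(\<Sum>n\<in>trits. \<Sum>m\<in>trits. p n m) = 1"
    and p01: "p 0 1 = 0" and p02: "p 0 2 = 0"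
  shows "(\<lambda>N. fidelity ((protocol_round p ^^ N) (bell_diag p))) \<longlonglongrightarrow> 1
    \<longleftrightarrow> p 0 0 > max (p 1 0 + p 1 1 + p 1 2) (p 2 0 + p 2 1 + p 2 2)"
proof -
  define w where "w n = shift_weight p n / 3" for n
  note weight = shift_weight_nonneg_ex_pos[OF nonneg normalised]
  have "(\<lambda>N. fidelity ((protocol_round p ^^ N) (bell_diag p))) \<longlonglongrightarrow> 1
      \<longleftrightarrow> (\<lambda>N. w 0 ^ Suc N / (\<Sum>n\<in>trits. w n ^ Suc N)) \<longlonglongrightarrow> 1"
    unfolding fidelity_protocol_iterate[OF assms] w_def
    by (metis (no_types) tendsto_of_real_iff of_real_1)
  also have "\<dots> \<longleftrightarrow> (\<lambda>N. w 0 ^ N / (\<Sum>n\<in>trits. w n ^ N)) \<longlonglongrightarrow> 1"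
    by (rule filterlim_sequentially_Suc)
  also have "\<dots> \<longleftrightarrow> (\<forall>n\<in>trits - {0}. w n < w 0)"
    using weight by (intro power_share_tendsto_1_iff) (auto simp: w_def mem_trits)
  also have "\<dots> \<longleftrightarrow> p 0 0 > max (p 1 0 + p 1 1 + p 1 2) (p 2 0 + p 2 1 + p 2 2)"
    using p01 p02 by (auto simp: w_def shift_weight_def sum_trits trits_def)
  finally show ?thesis .
qed

end
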